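(* The algebra $\mathtt{A}_5^{\{3,4\}}$ is wild.
   Context: $\Bbbk$ is an algebraically closed field; arrows compose right to left. $\mathtt{A}_n$ is the algebra of the quiver with vertices $1,\dots,n$, arrows $a_i:i\to i+1$, $b_i:i+1\to i$ ($1\le i\le n-1$), relations $a_ib_i=b_{i+1}a_{i+1}$ ($1\le i\le n-2$), $a_{n-1}b_{n-1}=0$. For $X\subset\{2,\dots,n\}$, $e_X$ is the sum of primitive idempotents for vertices in $\{1\}\cup X$ and $\mathtt{A}_n^X=e_X\mathtt{A}_ne_X$. *)

theory Defs
  imports "HOL-Computational_Algebra.Polynomial" "Jordan_Normal_Form.Matrix"
begin

datatype arrow = Arr_a nat | Arr_b nat

fun arr_src :: "arrow \<Rightarrow> nat" where
  "arr_src (Arr_a i) = i" | "arr_src (Arr_b i) = Suc i"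
fun arr_tgt :: "arrow \<Rightarrow> nat" where
  "arr_tgt (Arr_a i) = Suc i" | "arr_tgt (Arr_b i) = i"

definition arrow_ok :: "nat \<Rightarrow> arrow \<Rightarrow> bool" where
  "arrow_ok n x \<longleftrightarrow> (case x of Arr_a i \<Rightarrow> 1 \<le> i \<and> i \<le> n - 1 | Arr_b i \<Rightarrow> 1 \<le> i \<and> i \<le> n - 1)"

text \<open>A path is a pair (start vertex, list of arrows in the order they are traversed).  Arrows compose right to left, so the product
  p q (q first, then p) is the path with traversal list (arrows of q) @ (arrows of p).\<close>
type_synonym path = "nat \<times> arrow list"

fun walk_ok :: "nat \<Rightarrow> nat \<Rightarrow> arrow list \<Rightarrow> bool" where
  "walk_ok n v [] \<longleftrightarrow> 1 \<le> v \<and> v \<le> n"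
| "walk_ok n v (x # xs) \<longleftrightarrow> 1 \<le> v \<and> v \<le> n \<and> arrow_ok n x \<and> arr_src x = v \<and> walk_ok n (arr_tgt x) xs"

fun walk_end :: "nat \<Rightarrow> arrow list \<Rightarrow> nat" where
  "walk_end v [] = v" | "walk_end v (x # xs) = walk_end (arr_tgt x) xs"

definition path_src :: "path \<Rightarrow> nat" where "path_src p = fst p"
definition path_tgt :: "path \<Rightarrow> nat" where "path_tgt p = walk_end (fst p) (snd p)"

text \<open>Paths of Q_n starting and ending in the vertex set V = {1} \<union> X; these form a
  basis of e_X kQ_n e_X.\<close>
definition vpath :: "nat \<Rightarrow> nat set \<Rightarrow> path \<Rightarrow> bool" where
  "vpath n V p \<longleftrightarrow> walk_ok n (fst p) (snd p) \<and> path_src p \<in> V \<and> path_tgt p \<in> V"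

text \<open>Product p q in the path algebra (q first, then p), for tgt q = src p.\<close>
definition path_mult :: "path \<Rightarrow> path \<Rightarrow> path" where
  "path_mult p q = (fst q, snd q @ snd p)"

text \<open>Relations of A_n as traversal lists: a_i b_i = [b_i, a_i], b_{i+1} a_{i+1} = [a_{i+1}, b_{i+1}].\<close>
definition comm_rel_l :: "nat \<Rightarrow> arrow list" where "comm_rel_l i = [Arr_b i, Arr_a i]"
definition comm_rel_r :: "nat \<Rightarrow> arrow list" where "comm_rel_r i = [Arr_a (Suc i), Arr_b (Suc i)]"
definition zero_rel :: "nat \<Rightarrow> arrow list" where "zero_rel n = [Arr_b (n - 1), Arr_a (n - 1)]"

definition vset :: "nat set \<Rightarrow> nat set" where "vset X = insert 1 X"

text \<open>A finite-dimensional (left) module over e_X A_n e_X = e_X kQ e_X / e_X I e_X on k^d is given by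
  a unital algebra homomorphism into d x d matrices; by linearity it is determined by its values R p
  on the basis of paths between vertices of V.\<close>
definition is_rep :: "nat \<Rightarrow> nat set \<Rightarrow> nat \<Rightarrow> (path \<Rightarrow> 'k::field mat) \<Rightarrow> bool" where
  "is_rep n X d R \<longleftrightarrow>
     (\<forall>p. vpath n (vset X) p \<longrightarrow> R p \<in> carrier_mat d d)
   \<and> (\<forall>p q. vpath n (vset X) p \<longrightarrow> vpath n (vset X) q \<longrightarrow>
        (if path_tgt q = path_src p then R (path_mult p q) = R p * R q else R p * R q = 0\<^sub>m d d))
   \<and> mat d d (\<lambda>(i, j). \<Sum>v\<in>vset X. R (v, []) $$ (i, j)) = 1\<^sub>m d
   \<and> (\<forall>v pre post i. 1 \<le> i \<and> i \<le> n - 2 \<longrightarrow> vpath n (vset X) (v, pre @ comm_rel_l i @ post) \<longrightarrow>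
        R (v, pre @ comm_rel_l i @ post) = R (v, pre @ comm_rel_r i @ post))
   \<and> (\<forall>v pre post. vpath n (vset X) (v, pre @ zero_rel n @ post) \<longrightarrow>
        R (v, pre @ zero_rel n @ post) = 0\<^sub>m d d)"


definition rep_iso :: "nat \<Rightarrow> nat set \<Rightarrow> nat \<Rightarrow> (path \<Rightarrow> 'k::field mat) \<Rightarrow> nat \<Rightarrow> (path \<Rightarrow> 'k mat) \<Rightarrow> bool" where
  "rep_iso n X d R d' R' \<longleftrightarrow> d = d' \<and>
     (\<exists>S T. S \<in> carrier_mat d d \<and> T \<in> carrier_mat d d \<and> S * T = 1\<^sub>m d \<and> T * S = 1\<^sub>m d \<and>
        (\<forall>p. vpath n (vset X) p \<longrightarrow> S * R p = R' p * S))"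

definition rep_indec :: "nat \<Rightarrow> nat set \<Rightarrow> nat \<Rightarrow> (path \<Rightarrow> 'k::field mat) \<Rightarrow> bool" where
  "rep_indec n X d R \<longleftrightarrow> d > 0 \<and>
     (\<forall>E. E \<in> carrier_mat d d \<longrightarrow> (\<forall>p. vpath n (vset X) p \<longrightarrow> E * R p = R p * E) \<longrightarrow> E * E = E \<longrightarrow>
        E = 0\<^sub>m d d \<or> E = 1\<^sub>m d)"

text \<open>A k<x,y>-module on k^m is a pair (X, Y) of m x m matrices.  Words in x, y are
  bool lists (True = x, False = y); the word u @ v is the product u v.\<close>
fun word_eval :: "nat \<Rightarrow> 'k::field mat \<Rightarrow> 'k mat \<Rightarrow> bool list \<Rightarrow> 'k mat" where
  "word_eval m A B [] = 1\<^sub>m m"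
| "word_eval m A B (c # w) = (if c then A else B) * word_eval m A B w"

definition kxy_iso :: "nat \<Rightarrow> 'k::field mat \<Rightarrow> 'k mat \<Rightarrow> nat \<Rightarrow> 'k mat \<Rightarrow> 'k mat \<Rightarrow> bool" where
  "kxy_iso m A B m' A' B' \<longleftrightarrow> m = m' \<and>
     (\<exists>S T. S \<in> carrier_mat m m \<and> T \<in> carrier_mat m m \<and> S * T = 1\<^sub>m m \<and> T * S = 1\<^sub>m m \<and>
        S * A = A' * S \<and> S * B = B' * S)"

definition kxy_indec :: "nat \<Rightarrow> 'k::field mat \<Rightarrow> 'k mat \<Rightarrow> bool" where
  "kxy_indec m A B \<longleftrightarrow> m > 0 \<and>
     (\<forall>E. E \<in> carrier_mat m m \<longrightarrow> E * A = A * E \<longrightarrow> E * B = B * E \<longrightarrow> E * E = E \<longrightarrow>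
        E = 0\<^sub>m m m \<or> E = 1\<^sub>m m)"

text \<open>An (A_n^X, k<x,y>)-bimodule M which is free of rank r as right k<x,y>-module is given by a unital
  algebra homomorphism A_n^X -> M_r(k<x,y>).  We write the image of the path p as
  \<Sum>_w C p w \<cdot> w with C p w \<in> k^{r x r} and only finitely many w with C p w \<noteq> 0.
  The homomorphism conditions are the same as in is_rep, with products in M_r(k<x,y>).\<close>
definition is_bimod :: "nat \<Rightarrow> nat set \<Rightarrow> nat \<Rightarrow> (path \<Rightarrow> bool list \<Rightarrow> 'k::field mat) \<Rightarrow> bool" where
  "is_bimod n X r C \<longleftrightarrow>
     (\<forall>p w. vpath n (vset X) p \<longrightarrow> C p w \<in> carrier_mat r r)
   \<and> (\<forall>p. vpath n (vset X) p \<longrightarrow> finite {w. C p w \<noteq> 0\<^sub>m r r})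
   \<and> (\<forall>p q w. vpath n (vset X) p \<longrightarrow> vpath n (vset X) q \<longrightarrow>
        mat r r (\<lambda>(i, j). \<Sum>l\<in>{0..length w}. (C p (take l w) * C q (drop l w)) $$ (i, j))
        = (if path_tgt q = path_src p then C (path_mult p q) w else 0\<^sub>m r r))
   \<and> (\<forall>w. mat r r (\<lambda>(i, j). \<Sum>v\<in>vset X. C (v, []) w $$ (i, j)) = (if w = [] then 1\<^sub>m r else 0\<^sub>m r r))
   \<and> (\<forall>v pre post i w. 1 \<le> i \<and> i \<le> n - 2 \<longrightarrow> vpath n (vset X) (v, pre @ comm_rel_l i @ post) \<longrightarrow>
        C (v, pre @ comm_rel_l i @ post) w = C (v, pre @ comm_rel_r i @ post) w)
   \<and> (\<forall>v pre post w. vpath n (vset X) (v, pre @ zero_rel n @ post) \<longrightarrow>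
        C (v, pre @ zero_rel n @ post) w = 0\<^sub>m r r)"

text \<open>The functor M \<otimes>_{k<x,y>} - applied to the module (A, B) on k^m: the module on k^(r m) = (k^m)^r
  where the path p acts by the r x r block matrix whose (i, j) block is \<Sum>_w (C p w)_{ij} w(A, B).\<close>
definition tensor_rep :: "nat \<Rightarrow> (path \<Rightarrow> bool list \<Rightarrow> 'k::field mat) \<Rightarrow> nat \<Rightarrow> 'k mat \<Rightarrow> 'k mat \<Rightarrow> path \<Rightarrow> 'k mat" where
  "tensor_rep r C m A B p = mat (r * m) (r * m) (\<lambda>(i, j).
      \<Sum>w\<in>{w. C p w \<noteq> 0\<^sub>m r r}. C p w $$ (i div m, j div m) * word_eval m A B w $$ (i mod m, j mod m))"

text \<open>Wildness (Drozd): there is a bimodule M, free of finite rank as right k<x,y>-module, such that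
  M \<otimes> - (on finite-dimensional modules) preserves indecomposability and reflects isomorphism classes.\<close>
definition wild :: "nat \<Rightarrow> nat set \<Rightarrow> 'k::field itself \<Rightarrow> bool" where
  "wild n X (TYPE('k)) \<longleftrightarrow> (\<exists>r (C :: path \<Rightarrow> bool list \<Rightarrow> 'k mat). is_bimod n X r C
     \<and> (\<forall>m A B. A \<in> carrier_mat m m \<longrightarrow> B \<in> carrier_mat m m \<longrightarrow> kxy_indec m A B \<longrightarrow>
          rep_indec n X (r * m) (tensor_rep r C m A B))
     \<and> (\<forall>m A B m' A' B'. A \<in> carrier_mat m m \<longrightarrow> B \<in> carrier_mat m m \<longrightarrow>
          A' \<in> carrier_mat m' m' \<longrightarrow> B' \<in> carrier_mat m' m' \<longrightarrow>
          rep_iso n X (r * m) (tensor_rep r C m A B) (r * m') (tensor_rep r C m' A' B') \<longrightarrow>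
          kxy_iso m A B m' A' B'))"

end

theory Submission
  imports Defs
begin

(*
  A_5 has a representation by partial maps on sixteen basis vectors: e_0..e_3 at vertex 1,
  e_4..e_7 at vertex 3, e_8..e_10 at vertex 4, e_11..e_14 at vertex 2 and e_15 at vertex 5.
  Keeping only the eleven vectors at the vertices 1, 3, 4 of A_5^{3,4}, and adding to the path
  beta = b_1 b_2 the terms e_4 -> x e_2 and e_5 -> y e_2, gives a bimodule M that is free of
  rank 11 over k<x,y>.  A homomorphism E from M tensor (A, B) to M tensor (A', B') is an 11 x 11
  block matrix.  Commuting with the vertex idempotents and with b_1 a_1, a_2 a_1, a_3, b_3
  forces every block to be the (0,0) block F on the diagonal and zero off it, except for ten
  blocks from the top of a vertex to the rest of it; commuting with beta then says that F is a
  homomorphism from (A, B) to (A', B').  As E -> F is multiplicative, isomorphisms are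
  reflected; for an idempotent E, F is 0 or 1, which kills the ten free blocks, so
  indecomposables go to indecomposables.
*)

section \<open>Matrices of relations and block matrices\<close>

definition rel_mat :: "nat \<Rightarrow> (nat \<times> nat) set \<Rightarrow> 'a::{zero,one} mat" where
  "rel_mat n R = mat n n (\<lambda>(i, j). if (i, j) \<in> R then 1 else 0)"

lemma rel_mat_carrier [simp]: "rel_mat n R \<in> carrier_mat n n"
  by (simp add: rel_mat_def)

lemma dim_rel_mat [simp]: "dim_row (rel_mat n R) = n" "dim_col (rel_mat n R) = n"
  by (simp_all add: rel_mat_def)

lemma index_rel_mat [simp]: "i < n \<Longrightarrow> j < n \<Longrightarrow> rel_mat n R $$ (i, j) = (if (i, j) \<in> R then 1 else 0)"
  by (simp add: rel_mat_def)

lemma rel_mat_empty: "rel_mat n {} = 0\<^sub>m n n"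
  by (rule eq_matI) auto

lemma rel_mat_mult:
  assumes range: "Range R \<subseteq> {..<n}" and sv: "single_valued (S\<inverse>)"
  shows "(rel_mat n R :: 'a::semiring_1 mat) * rel_mat n S = rel_mat n (R O S)"
proof (rule eq_matI)
  fix i j assume "i < dim_row (rel_mat n (R O S) :: 'a mat)" "j < dim_col (rel_mat n (R O S) :: 'a mat)"
  then have i: "i < n" and j: "j < n" by simp_all
  have "(rel_mat n R * rel_mat n S :: 'a mat) $$ (i, j)
      = (\<Sum>k\<in>{0..<n}. if (i, k) \<in> R \<and> (k, j) \<in> S then 1 else 0)"
    using i j by (auto simp: scalar_prod_def intro!: sum.cong)
  also have "\<dots> = (if (i, j) \<in> R O S then 1 else 0)"
  proof (cases "(i, j) \<in> R O S")
    case True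
    then obtain k where k: "(i, k) \<in> R" "(k, j) \<in> S" by blast
    have "(i, k') \<in> R \<and> (k', j) \<in> S \<longleftrightarrow> k' = k" for k'
      using k sv by (auto simp: single_valued_def)
    moreover have "k < n" using k range by blast
    ultimately show ?thesis using True by simp
  qed (auto intro!: sum.neutral)
  finally show "(rel_mat n R * rel_mat n S :: 'a mat) $$ (i, j) = rel_mat n (R O S) $$ (i, j)"
    using i j by simp
qed auto

lemma rel_mat_add_exclusive:
  "\<not> (P \<and> Q) \<Longrightarrow> (rel_mat n (if P then R else {}) :: 'a::{monoid_add,zero,one} mat) + rel_mat n (if Q then R else {})
    = rel_mat n (if P \<or> Q then R else {})"
  by (cases P; cases Q) (simp_all add: rel_mat_empty)

lemma add_zero_mat_dims [simp]:
  fixes X :: "'a::monoid_add mat"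
  shows "dim_row X = nr \<Longrightarrow> dim_col X = nc \<Longrightarrow> X + 0\<^sub>m nr nc = X"
    and "dim_row X = nr \<Longrightarrow> dim_col X = nc \<Longrightarrow> 0\<^sub>m nr nc + X = X"
  by (auto intro!: eq_matI)

lemma mat_eq_add_self_imp_zero:
  fixes X :: "'a::cancel_comm_monoid_add mat"
  assumes X: "X \<in> carrier_mat n n'" and eq: "X = X + X"
  shows "X = 0\<^sub>m n n'"
proof (rule eq_matI)
  fix i j assume ij: "i < dim_row (0\<^sub>m n n' :: 'a mat)" "j < dim_col (0\<^sub>m n n' :: 'a mat)"
  have "X $$ (i, j) = (X + X) $$ (i, j)"
    using eq by simp
  also have "\<dots> = X $$ (i, j) + X $$ (i, j)"
    using X ij by simp
  finally show "X $$ (i, j) = 0\<^sub>m n n' $$ (i, j)"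
    using ij by simp
qed (use X in auto)

lemma inverse_intertwines:
  fixes S :: "'a::semiring_1 mat"
  assumes S: "S \<in> carrier_mat n n" and T: "T \<in> carrier_mat n n"
    and X: "X \<in> carrier_mat n n" and Y: "Y \<in> carrier_mat n n"
    and ST: "S * T = 1\<^sub>m n" and TS: "T * S = 1\<^sub>m n" and hom: "S * X = Y * S"
  shows "T * Y = X * T"
proof -
  have "T * Y = (T * Y) * (S * T)"
    using T Y ST by simp
  also have "\<dots> = T * ((Y * S) * T)"
    using S T Y by (simp add: assoc_mult_mat[of _ n n _ n _ n])
  also have "\<dots> = T * ((S * X) * T)"
    by (simp add: hom)
  also have "\<dots> = (T * S) * (X * T)"
    using S T X by (simp add: assoc_mult_mat[of _ n n _ n _ n])
  also have "\<dots> = X * T"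
    using T X TS by simp
  finally show ?thesis .
qed

definition kron :: "'a::times mat \<Rightarrow> 'a mat \<Rightarrow> 'a mat" where
  "kron P W = mat (dim_row P * dim_row W) (dim_col P * dim_col W)
     (\<lambda>(i, j). P $$ (i div dim_row W, j div dim_col W) * W $$ (i mod dim_row W, j mod dim_col W))"

definition block :: "nat \<Rightarrow> 'a mat \<Rightarrow> nat \<Rightarrow> nat \<Rightarrow> 'a mat" where
  "block m E k l = mat m m (\<lambda>(s, t). E $$ (k * m + s, l * m + t))"

lemma block_carrier [simp]: "block m E k l \<in> carrier_mat m m"
  by (simp add: block_def)

lemma dim_block [simp]: "dim_row (block m E k l) = m" "dim_col (block m E k l) = m"
  by (simp_all add: block_def)

lemma index_block [simp]: "s < m \<Longrightarrow> t < m \<Longrightarrow> block m E k l $$ (s, t) = E $$ (k * m + s, l * m + t)"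
  by (simp add: block_def)

lemma block_index_less: "k < n \<Longrightarrow> s < m \<Longrightarrow> k * m + s < n * (m::nat)"
proof -
  assume "k < n" "s < m"
  then have "k * m + s < Suc k * m" by simp
  also have "\<dots> \<le> n * m" using \<open>k < n\<close> by (intro mult_le_mono1) simp
  finally show ?thesis .
qed

lemma kron_carrier: "P \<in> carrier_mat n n \<Longrightarrow> W \<in> carrier_mat m m \<Longrightarrow> kron P W \<in> carrier_mat (n * m) (n * m)"
  by (simp add: kron_def carrier_matD)

lemma kron_zero_mat: "kron (0\<^sub>m n n) W = (0\<^sub>m (n * dim_row W) (n * dim_col W) :: 'a::mult_zero mat)"
  by (rule eq_matI) (auto simp: kron_def less_mult_imp_div_less)

lemma sum_atLeastLessThan_add: "(\<Sum>j\<in>{a..<a + m}. g j) = (\<Sum>u<m. g (a + u :: nat))"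
  by (induction m) (simp_all add: lessThan_Suc add.commute)

lemma block_mult:
  assumes "E \<in> carrier_mat (n * m) (n * m)" "E' \<in> carrier_mat (n * m) (n * m)"
    and "k < n" "l < n" "s < m" "t < m"
  shows "block m (E * E') k l $$ (s, t) = (\<Sum>k'<n. (block m E k k' * block m E' k' l) $$ (s, t))"
proof -
  have "block m (E * E') k l $$ (s, t) = (\<Sum>j<n * m. E $$ (k * m + s, j) * E' $$ (j, l * m + t))"
    using assms block_index_less[of k n s m] block_index_less[of l n t m]
    by (simp add: scalar_prod_def atLeast0LessThan)
  also have "\<dots> = (\<Sum>k'<n. \<Sum>j\<in>{k' * m..<k' * m + m}. E $$ (k * m + s, j) * E' $$ (j, l * m + t))"
    by (rule sum.nat_group[symmetric])
  also have "\<dots> = (\<Sum>k'<n. \<Sum>u<m. E $$ (k * m + s, k' * m + u) * E' $$ (k' * m + u, l * m + t))"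
    by (simp add: sum_atLeastLessThan_add)
  also have "\<dots> = (\<Sum>k'<n. (block m E k k' * block m E' k' l) $$ (s, t))"
    using assms by (simp add: scalar_prod_def atLeast0LessThan)
  finally show ?thesis .
qed

lemma block_add:
  assumes "E \<in> carrier_mat (n * m) (n * m)" "E' \<in> carrier_mat (n * m) (n * m)" "k < n" "l < n"
  shows "block m (E + E') k l = block m E k l + block m E' k l"
  by (rule eq_matI) (use assms block_index_less in auto)

lemma block_mult_add_distrib:
  fixes E :: "'a::semiring_0 mat"
  assumes "E \<in> carrier_mat (n * m) (n * m)" "X \<in> carrier_mat (n * m) (n * m)" "Y \<in> carrier_mat (n * m) (n * m)"
    and "k < n" "l < n"
  shows "block m (E * (X + Y)) k l = block m (E * X) k l + block m (E * Y) k l"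
  using mult_add_distrib_mat[OF assms(1-3)]
    block_add[OF mult_carrier_mat[OF assms(1,2)] mult_carrier_mat[OF assms(1,3)] assms(4,5)]
  by simp

lemma block_add_mult_distrib:
  fixes E :: "'a::semiring_0 mat"
  assumes "E \<in> carrier_mat (n * m) (n * m)" "X \<in> carrier_mat (n * m) (n * m)" "Y \<in> carrier_mat (n * m) (n * m)"
    and "k < n" "l < n"
  shows "block m ((X + Y) * E) k l = block m (X * E) k l + block m (Y * E) k l"
  using add_mult_distrib_mat[OF assms(2,3,1)]
    block_add[OF mult_carrier_mat[OF assms(2,1)] mult_carrier_mat[OF assms(3,1)] assms(4,5)]
  by simp

lemma block_one_mat:
  assumes "k < n" "l < n"
  shows "block m (1\<^sub>m (n * m)) k l = (if k = l then 1\<^sub>m m else 0\<^sub>m m m)"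
proof (rule eq_matI)
  fix s t assume "s < dim_row (if k = l then 1\<^sub>m m else 0\<^sub>m m m :: 'a mat)"
    "t < dim_col (if k = l then 1\<^sub>m m else 0\<^sub>m m m :: 'a mat)"
  then have "s < m" "t < m" by (simp_all split: if_splits)
  moreover have "k * m + s = l * m + t \<longleftrightarrow> k = l \<and> s = t" if "s < m" "t < m"
    by (metis that add_right_cancel div_mult_self3 less_zeroE mod_mult_self3 mult.commute
        not_gr_zero div_less mod_less)
  ultimately show "block m (1\<^sub>m (n * m)) k l $$ (s, t) = (if k = l then 1\<^sub>m m else 0\<^sub>m m m :: 'a mat) $$ (s, t)"
    using assms block_index_less by auto
qed auto

lemma block_zero_mat: "k < n \<Longrightarrow> l < n \<Longrightarrow> block m (0\<^sub>m (n * m) (n * m)) k l = 0\<^sub>m m m"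
  by (rule eq_matI) (auto simp: block_index_less)

lemma eq_mat_blockI:
  assumes "E \<in> carrier_mat (n * m) (n * m)" "E' \<in> carrier_mat (n * m) (n * m)"
    and "\<And>k l. k < n \<Longrightarrow> l < n \<Longrightarrow> block m E k l = block m E' k l"
  shows "E = E'"
proof (rule eq_matI)
  fix i j assume "i < dim_row E'" "j < dim_col E'"
  then have i: "i < n * m" and j: "j < n * m" using assms(2) by auto
  then have m: "0 < m" by (cases m) auto
  have "i div m < n" "j div m < n"
    using i j by (simp_all add: less_mult_imp_div_less)
  then have "block m E (i div m) (j div m) $$ (i mod m, j mod m) = block m E' (i div m) (j div m) $$ (i mod m, j mod m)"
    using assms(3) by simp
  then show "E $$ (i, j) = E' $$ (i, j)"
    using m by (simp add: mult.commute)
qed (use assms in auto)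

lemma block_mult_single:
  fixes E :: "'a::semiring_0 mat"
  assumes "E \<in> carrier_mat (n * m) (n * m)" "E' \<in> carrier_mat (n * m) (n * m)" "k < n" "l < n" "a < n"
    and "\<And>k'. k' < n \<Longrightarrow> k' \<noteq> a \<Longrightarrow> block m E k k' = 0\<^sub>m m m"
  shows "block m (E * E') k l = block m E k a * block m E' a l"
proof (rule eq_matI)
  fix s t assume "s < dim_row (block m E k a * block m E' a l)" "t < dim_col (block m E k a * block m E' a l)"
  then have st: "s < m" "t < m" by simp_all
  have "block m (E * E') k l $$ (s, t) = (\<Sum>k'<n. (block m E k k' * block m E' k' l) $$ (s, t))"
    by (rule block_mult[OF assms(1-4) st])
  also have "\<dots> = (\<Sum>k'<n. if k' = a then (block m E k a * block m E' a l) $$ (s, t) else 0)"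
    using assms(6) st by (intro sum.cong) auto
  finally show "block m (E * E') k l $$ (s, t) = (block m E k a * block m E' a l) $$ (s, t)"
    using assms(5) by simp
qed simp_all

lemma block_mult_pair:
  fixes E :: "'a::semiring_0 mat"
  assumes "E \<in> carrier_mat (n * m) (n * m)" "E' \<in> carrier_mat (n * m) (n * m)" "k < n" "l < n"
    and "a < n" "b < n" "a \<noteq> b"
    and "\<And>k'. k' < n \<Longrightarrow> k' \<noteq> a \<Longrightarrow> k' \<noteq> b \<Longrightarrow> block m E k k' = 0\<^sub>m m m \<or> block m E' k' l = 0\<^sub>m m m"
  shows "block m (E * E') k l = block m E k a * block m E' a l + block m E k b * block m E' b l"
proof (rule eq_matI)
  fix s t assume "s < dim_row (block m E k a * block m E' a l + block m E k b * block m E' b l)"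
    "t < dim_col (block m E k a * block m E' a l + block m E k b * block m E' b l)"
  then have st: "s < m" "t < m" by simp_all
  let ?g = "\<lambda>k'. (block m E k k' * block m E' k' l) $$ (s, t)"
  have "block m (E * E') k l $$ (s, t) = (\<Sum>k'<n. ?g k')"
    by (rule block_mult[OF assms(1-4) st])
  also have "\<dots> = (\<Sum>k'\<in>{a, b}. ?g k')"
  proof (rule sum.mono_neutral_right)
    show "\<forall>k'\<in>{..<n} - {a, b}. ?g k' = 0"
    proof
      fix k' assume "k' \<in> {..<n} - {a, b}"
      then have "block m E k k' = 0\<^sub>m m m \<or> block m E' k' l = 0\<^sub>m m m"
        using assms(8) by blast
      then show "?g k' = 0" using st by auto
    qed
  qed (use assms(5,6) in auto)
  finally show "block m (E * E') k l $$ (s, t)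
    = (block m E k a * block m E' a l + block m E k b * block m E' b l) $$ (s, t)"
    using assms(7) st by simp
qed simp_all

lemma block_kron_rel_mat:
  fixes W :: "'a::semiring_1 mat"
  assumes "W \<in> carrier_mat m m" "k < n" "l < n"
  shows "block m (kron (rel_mat n R) W) k l = (if (k, l) \<in> R then W else 0\<^sub>m m m)"
  by (rule eq_matI) (use assms block_index_less in \<open>auto simp: kron_def carrier_matD\<close>)

lemma block_mult_kron_rel_mat:
  fixes E :: "'a::semiring_1 mat"
  assumes E: "E \<in> carrier_mat (n * m) (n * m)" and W: "W \<in> carrier_mat m m"
    and R: "R \<subseteq> {..<n} \<times> {..<n}" and kl: "k < n" "l < n"
  shows "single_valued (R\<inverse>) \<Longrightarrow> (k', l) \<in> R \<Longrightarrow> block m (E * kron (rel_mat n R) W) k l = block m E k k' * W"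
    and "l \<notin> Range R \<Longrightarrow> block m (E * kron (rel_mat n R) W) k l = 0\<^sub>m m m"
proof -
  have K: "kron (rel_mat n R) W \<in> carrier_mat (n * m) (n * m)"
    using W by (simp add: kron_carrier)
  have entry: "block m (E * kron (rel_mat n R) W) k l $$ (s, t)
      = (\<Sum>k''<n. if (k'', l) \<in> R then (block m E k k'' * W) $$ (s, t) else 0)" if "s < m" "t < m" for s t
  proof -
    have "block m (E * kron (rel_mat n R) W) k l $$ (s, t)
      = (\<Sum>k''<n. (block m E k k'' * block m (kron (rel_mat n R) W) k'' l) $$ (s, t))"
      by (rule block_mult[OF E K kl that])
    also have "\<dots> = (\<Sum>k''<n. if (k'', l) \<in> R then (block m E k k'' * W) $$ (s, t) else 0)"
      by (intro sum.cong refl) (simp add: block_kron_rel_mat[OF W _ kl(2)] that)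
    finally show ?thesis .
  qed
  show "block m (E * kron (rel_mat n R) W) k l = block m E k k' * W"
    if sv: "single_valued (R\<inverse>)" and kl': "(k', l) \<in> R"
  proof (rule eq_matI)
    fix s t assume "s < dim_row (block m E k k' * W)" "t < dim_col (block m E k k' * W)"
    then have st: "s < m" "t < m" using W by auto
    have "(k'', l) \<in> R \<longleftrightarrow> k'' = k'" for k''
      using sv kl' by (auto simp: single_valued_def)
    moreover have "k' < n" using kl' R by auto
    ultimately show "block m (E * kron (rel_mat n R) W) k l $$ (s, t) = (block m E k k' * W) $$ (s, t)"
      using entry[OF st] by simp
  qed (use W in auto)
  show "block m (E * kron (rel_mat n R) W) k l = 0\<^sub>m m m" if "l \<notin> Range R"
    using entry that by (intro eq_matI) (force intro!: sum.neutral)+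
qed

lemma block_kron_rel_mat_mult:
  fixes E :: "'a::semiring_1 mat"
  assumes E: "E \<in> carrier_mat (n * m) (n * m)" and W: "W \<in> carrier_mat m m"
    and R: "R \<subseteq> {..<n} \<times> {..<n}" and kl: "k < n" "l < n"
  shows "single_valued R \<Longrightarrow> (k, k') \<in> R \<Longrightarrow> block m (kron (rel_mat n R) W * E) k l = W * block m E k' l"
    and "k \<notin> Domain R \<Longrightarrow> block m (kron (rel_mat n R) W * E) k l = 0\<^sub>m m m"
proof -
  have K: "kron (rel_mat n R) W \<in> carrier_mat (n * m) (n * m)"
    using W by (simp add: kron_carrier)
  have entry: "block m (kron (rel_mat n R) W * E) k l $$ (s, t)
      = (\<Sum>k''<n. if (k, k'') \<in> R then (W * block m E k'' l) $$ (s, t) else 0)" if "s < m" "t < m" for s t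
  proof -
    have "block m (kron (rel_mat n R) W * E) k l $$ (s, t)
      = (\<Sum>k''<n. (block m (kron (rel_mat n R) W) k k'' * block m E k'' l) $$ (s, t))"
      by (rule block_mult[OF K E kl that])
    also have "\<dots> = (\<Sum>k''<n. if (k, k'') \<in> R then (W * block m E k'' l) $$ (s, t) else 0)"
      using W by (intro sum.cong refl) (simp add: block_kron_rel_mat[OF W kl(1)] that scalar_prod_def)
    finally show ?thesis .
  qed
  show "block m (kron (rel_mat n R) W * E) k l = W * block m E k' l"
    if sv: "single_valued R" and kk': "(k, k') \<in> R"
  proof (rule eq_matI)
    fix s t assume "s < dim_row (W * block m E k' l)" "t < dim_col (W * block m E k' l)"
    then have st: "s < m" "t < m" using W by auto
    have "(k, k'') \<in> R \<longleftrightarrow> k'' = k'" for k''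
      using sv kk' by (auto simp: single_valued_def)
    moreover have "k' < n" using kk' R by auto
    ultimately show "block m (kron (rel_mat n R) W * E) k l $$ (s, t) = (W * block m E k' l) $$ (s, t)"
      using entry[OF st] by simp
  qed (use W in auto)
  show "block m (kron (rel_mat n R) W * E) k l = 0\<^sub>m m m" if "k \<notin> Domain R"
    using entry that by (intro eq_matI) (force intro!: sum.neutral)+
qed

lemma block_mult_kron_singleton:
  fixes E :: "'a::semiring_1 mat"
  assumes "E \<in> carrier_mat (n * m) (n * m)" "W \<in> carrier_mat m m" "a < n" "b < n" "k < n" "l < n"
  shows "block m (E * kron (rel_mat n {(a, b)}) W) k l = (if l = b then block m E k a * W else 0\<^sub>m m m)"
  using block_mult_kron_rel_mat[OF assms(1,2) _ assms(5,6), of "{(a, b)}"] assms(3,4)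
  by (auto simp: single_valued_def)

lemma block_kron_singleton_mult:
  fixes E :: "'a::semiring_1 mat"
  assumes "E \<in> carrier_mat (n * m) (n * m)" "W \<in> carrier_mat m m" "a < n" "b < n" "k < n" "l < n"
  shows "block m (kron (rel_mat n {(a, b)}) W * E) k l = (if k = a then W * block m E b l else 0\<^sub>m m m)"
  using block_kron_rel_mat_mult[OF assms(1,2) _ assms(5,6), of "{(a, b)}"] assms(3,4)
  by (auto simp: single_valued_def)

lemma blocks_commuting_with_kron_rel_mat:
  fixes E :: "'a::semiring_1 mat"
  assumes E: "E \<in> carrier_mat (n * m) (n * m)"
    and R: "R \<subseteq> {..<n} \<times> {..<n}" "single_valued R" "single_valued (R\<inverse>)"
    and comm: "E * kron (rel_mat n R) (1\<^sub>m m) = kron (rel_mat n R) (1\<^sub>m m) * E"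
  shows "(k', k) \<in> R \<Longrightarrow> (l', l) \<in> R \<Longrightarrow> block m E k' l' = block m E k l"
    and "(k', k) \<in> R \<Longrightarrow> l < n \<Longrightarrow> l \<notin> Range R \<Longrightarrow> block m E k l = 0\<^sub>m m m"
    and "(l', l) \<in> R \<Longrightarrow> k < n \<Longrightarrow> k \<notin> Domain R \<Longrightarrow> block m E k l' = 0\<^sub>m m m"
proof -
  note right = block_mult_kron_rel_mat[OF E one_carrier_mat R(1)]
  note left = block_kron_rel_mat_mult[OF E one_carrier_mat R(1)]
  show "block m E k' l' = block m E k l" if "(k', k) \<in> R" "(l', l) \<in> R"
  proof -
    have "k' < n" "l < n" using that R(1) by auto
    then have "block m E k' l' * 1\<^sub>m m = 1\<^sub>m m * block m E k l"
      using right(1)[OF _ _ R(3) that(2)] left(1)[OF _ _ R(2) that(1)] comm by metis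
    then show ?thesis by simp
  qed
  show "block m E k l = 0\<^sub>m m m" if "(k', k) \<in> R" "l < n" "l \<notin> Range R"
  proof -
    have "k' < n" using that R(1) by auto
    then have "0\<^sub>m m m = 1\<^sub>m m * block m E k l"
      using right(2)[OF _ that(2,3)] left(1)[OF _ that(2) R(2) that(1)] comm by metis
    then show ?thesis by simp
  qed
  show "block m E k l' = 0\<^sub>m m m" if "(l', l) \<in> R" "k < n" "k \<notin> Domain R"
  proof -
    have "l < n" using that R(1) by auto
    then have "block m E k l' * 1\<^sub>m m = 0\<^sub>m m m"
      using right(1)[OF that(2) _ R(3) that(1)] left(2)[OF that(2) _ that(3)] comm by metis
    then show ?thesis by simp
  qed
qed

section \<open>A representation of A_5 by partial maps\<close>

definition vertex_basis :: "nat \<Rightarrow> nat set" where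
  "vertex_basis v =
     (if v = 1 then {0, 1, 2, 3} else if v = 3 then {4, 5, 6, 7} else if v = 4 then {8, 9, 10}
      else if v = 2 then {11, 12, 13, 14} else if v = 5 then {15} else {})"

(* (i, j) \<in> arrow_rel x: the arrow x maps the j-th basis vector to the i-th one. *)
definition arrow_rel :: "arrow \<Rightarrow> (nat \<times> nat) set" where
  "arrow_rel x =
     (if x = Arr_a 1 then {(11, 0), (12, 1)}
      else if x = Arr_b 1 then {(2, 11), (3, 12), (3, 13)}
      else if x = Arr_a 2 then {(6, 11), (7, 12), (6, 13), (7, 14)}
      else if x = Arr_b 2 then {(13, 4), (14, 5)}
      else if x = Arr_a 3 then {(8, 4), (9, 5), (10, 7)}
      else if x = Arr_b 3 then {(6, 8), (7, 9)}
      else if x = Arr_a 4 then {(15, 9)}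
      else if x = Arr_b 4 then {(10, 15)}
      else {})"

fun path_rel :: "arrow list \<Rightarrow> (nat \<times> nat) set" where
  "path_rel [] = Id"
| "path_rel (x # xs) = path_rel xs O arrow_rel x"

lemma path_rel_append: "path_rel (xs @ ys) = path_rel ys O path_rel xs"
  by (induction xs) (auto simp: O_assoc)

lemma single_valued_converse_path_rel: "single_valued ((path_rel xs)\<inverse>)"
proof (induction xs)
  case (Cons x xs)
  have "single_valued ((arrow_rel x)\<inverse>)"
    unfolding arrow_rel_def by (auto simp: single_valued_def)
  with Cons show ?case by (simp add: converse_relcomp single_valued_relcomp)
qed (simp add: single_valued_def)

lemma arrow_ok_5_cases:
  assumes "arrow_ok 5 x"
  shows "x \<in> {Arr_a 1, Arr_a 2, Arr_a 3, Arr_a 4, Arr_b 1, Arr_b 2, Arr_b 3, Arr_b 4}"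
proof -
  have "\<exists>i\<in>{1, 2, 3, 4}. x = Arr_a i \<or> x = Arr_b i"
    using assms by (cases x) (auto simp: arrow_ok_def)
  then show ?thesis by auto
qed

lemma arrow_rel_subset_basis:
  "arrow_ok 5 x \<Longrightarrow> arrow_rel x \<subseteq> vertex_basis (arr_tgt x) \<times> vertex_basis (arr_src x)"
  by (drule arrow_ok_5_cases) (auto simp: arrow_rel_def vertex_basis_def)

lemma path_rel_maps_basis:
  "walk_ok 5 v xs \<Longrightarrow> (i, j) \<in> path_rel xs \<Longrightarrow> j \<in> vertex_basis v \<Longrightarrow> i \<in> vertex_basis (walk_end v xs)"
proof (induction xs arbitrary: v j)
  case (Cons x xs)
  then obtain k where "(i, k) \<in> path_rel xs" "(k, j) \<in> arrow_rel x" by auto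
  with Cons arrow_rel_subset_basis[of x] show ?case by auto
qed simp

lemma vertex_basis_disjoint: "u \<noteq> v \<Longrightarrow> vertex_basis u \<inter> vertex_basis v = {}"
  by (auto simp: vertex_basis_def)

lemma arrow_rel_avoids: "(i, j) \<in> arrow_rel x \<Longrightarrow> j \<notin> {2, 3} \<and> i \<notin> {4, 5}"
  by (auto simp: arrow_rel_def split: if_splits)

lemma path_rel_avoids: "xs \<noteq> [] \<Longrightarrow> (i, j) \<in> path_rel xs \<Longrightarrow> j \<notin> {2, 3} \<and> i \<notin> {4, 5}"
proof (induction xs arbitrary: i j)
  case (Cons x xs)
  then obtain k where ik: "(i, k) \<in> path_rel xs" and kj: "(k, j) \<in> arrow_rel x" by auto
  have "i \<notin> {4, 5}"
  proof (cases "xs = []")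
    case True
    then show ?thesis using ik arrow_rel_avoids[OF kj] by simp
  next
    case False
    then show ?thesis using Cons.IH[OF False ik] by blast
  qed
  then show ?case using arrow_rel_avoids[OF kj] by blast
qed simp

lemma path_rel_source_2_3: "j \<in> {2, 3} \<Longrightarrow> (i, j) \<in> path_rel xs \<longleftrightarrow> xs = [] \<and> i = j"
  using path_rel_avoids[of xs i j] by (cases "xs = []") auto

lemma path_rel_target_4_5: "i \<in> {4, 5} \<Longrightarrow> (i, j) \<in> path_rel xs \<longleftrightarrow> xs = [] \<and> i = j"
  using path_rel_avoids[of xs i j] by (cases "xs = []") auto

lemma path_rel_comm_rel_cases:
  "path_rel (comm_rel_l 1) = path_rel (comm_rel_r 1)"
  "path_rel (comm_rel_l 2) = path_rel (comm_rel_r 2)"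
  "path_rel (comm_rel_l 3) = path_rel (comm_rel_r 3)"
  by (simp_all add: comm_rel_l_def comm_rel_r_def arrow_rel_def) auto

lemma path_rel_comm_rel: "1 \<le> i \<Longrightarrow> i \<le> 3 \<Longrightarrow> path_rel (comm_rel_l i) = path_rel (comm_rel_r i)"
  using path_rel_comm_rel_cases by (cases "i = 1 \<or> i = 2 \<or> i = 3") auto

lemma path_rel_zero_rel: "path_rel (zero_rel 5) = {}"
  by (simp add: zero_rel_def arrow_rel_def) auto

section \<open>The bimodule\<close>

lemma convolution_degree_le_one:
  fixes f g :: "bool list \<Rightarrow> 'a::semiring_1 mat"
  assumes carrier: "\<And>w. f w \<in> carrier_mat n n" "\<And>w. g w \<in> carrier_mat n n"
    and linear: "\<And>w. 2 \<le> length w \<Longrightarrow> f w = 0\<^sub>m n n" "\<And>w. 2 \<le> length w \<Longrightarrow> g w = 0\<^sub>m n n"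
    and square_zero: "\<And>a b. f [a] * g [b] = 0\<^sub>m n n"
  shows "mat n n (\<lambda>(i, j). \<Sum>l\<in>{0..length w}. (f (take l w) * g (drop l w)) $$ (i, j))
    = (if w = [] then f [] * g [] else if length w = 1 then f [] * g w + f w * g [] else 0\<^sub>m n n)"
proof -
  have dims: "dim_row (f w) = n" "dim_col (f w) = n" "dim_row (g w) = n" "dim_col (g w) = n" for w
    using carrier(1)[of w] carrier(2)[of w] by auto
  consider (empty) "w = []" | (single) a where "w = [a]" | (long) a b u where "w = a # b # u"
    by (metis list.exhaust)
  then show ?thesis
  proof cases
    case single
    have "{0..Suc 0} = {0, Suc 0}" by auto
    with single show ?thesis using dims by (intro eq_matI) auto
  next
    case (long a b u)
    have "f (take l w) * g (drop l w) = 0\<^sub>m n n" if "l \<le> length w" for l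
    proof -
      consider (l0) "l = 0" | (l1_last) "l = 1" "u = []" | (l1) "l = 1" "u \<noteq> []" | (l2) "2 \<le> l"
        by linarith
      then show ?thesis
      proof cases
        case l0
        then show ?thesis using long linear(2) right_mult_zero_mat[OF carrier(1)] by simp
      next
        case l1_last
        then show ?thesis using long square_zero by simp
      next
        case l1
        then have "g (drop l w) = 0\<^sub>m n n" using long by (intro linear(2)) (cases u, auto)
        then show ?thesis using right_mult_zero_mat[OF carrier(1)] by simp
      next
        case l2
        then show ?thesis using long that linear(1) left_mult_zero_mat[OF carrier(2)] by simp
      qed
    qed
    with long show ?thesis using dims by (intro eq_matI) auto
  qed (use dims in \<open>auto intro!: eq_matI\<close>)
qed

definition beta_path :: "arrow list" where
  "beta_path = [Arr_b 2, Arr_b 1]"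

(* Besides its partial map e_4 -> e_3, beta also sends e_4 to x e_2 and e_5 to y e_2.  These
   terms multiply to zero with every nonempty path because no arrow leaves e_2, e_3 or reaches
   e_4, e_5 (path_rel_avoids). *)
definition var_rel :: "bool \<Rightarrow> (nat \<times> nat) set" where
  "var_rel c = {(2, if c then 4 else 5)}"

definition coeff_rel :: "path \<Rightarrow> bool list \<Rightarrow> (nat \<times> nat) set" where
  "coeff_rel p w =
     (if w = [] then path_rel (snd p) O Id_on (vertex_basis (fst p))
      else if snd p = beta_path \<and> length w = 1 then var_rel (hd w) else {})"

definition coeff :: "path \<Rightarrow> bool list \<Rightarrow> 'a::{zero,one} mat" where
  "coeff p w = rel_mat 11 (coeff_rel p w)"

lemma coeff_carrier [simp]: "coeff p w \<in> carrier_mat 11 11"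
  by (simp add: coeff_def)

lemma dim_coeff [simp]: "dim_row (coeff p w) = 11" "dim_col (coeff p w) = 11"
  by (simp_all add: coeff_def)

lemma coeff_rel_simps:
  "coeff_rel p [] = path_rel (snd p) O Id_on (vertex_basis (fst p))"
  "coeff_rel p [c] = (if snd p = beta_path then var_rel c else {})"
  "2 \<le> length w \<Longrightarrow> coeff_rel p w = {}"
  by (auto simp: coeff_rel_def)

lemma coeff_support: "{w. (coeff p w :: 'a::{zero,one} mat) \<noteq> 0\<^sub>m 11 11} \<subseteq> {[], [True], [False]}"
proof
  fix w assume "w \<in> {w. (coeff p w :: 'a mat) \<noteq> 0\<^sub>m 11 11}"
  then have "length w < 2"
    using coeff_rel_simps(3)[of w p] by (force simp: coeff_def rel_mat_empty)
  then show "w \<in> {[], [True], [False]}"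
    by (cases w) auto
qed

lemma vset_3_4: "vset {3, 4} = {1, 3, 4}"
  by (auto simp: vset_def)

lemma coeff_mult:
  assumes "fst p \<in> {1, 3, 4}"
  shows "(coeff p u :: 'a::semiring_1 mat) * coeff q w = rel_mat 11 (coeff_rel p u O coeff_rel q w)"
  unfolding coeff_def
proof (rule rel_mat_mult)
  show "Range (coeff_rel p u) \<subseteq> {..<11}"
    using assms by (auto simp: coeff_rel_def var_rel_def vertex_basis_def)
  have "single_valued ((path_rel (snd q) O Id_on (vertex_basis (fst q)))\<inverse>)"
    by (auto simp: converse_relcomp single_valued_converse_path_rel
        intro!: single_valued_relcomp)
  then show "single_valued ((coeff_rel q w)\<inverse>)"
    by (auto simp: coeff_rel_def var_rel_def single_valued_def)
qed

lemma Id_on_basis_O_path_rel: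
  assumes "walk_ok 5 v xs"
  shows "Id_on (vertex_basis u) O (path_rel xs O Id_on (vertex_basis v))
    = (if u = walk_end v xs then path_rel xs O Id_on (vertex_basis v) else {})"
  using path_rel_maps_basis[OF assms] vertex_basis_disjoint[of u "walk_end v xs"] by auto

lemma coeff_rel_Nil_mult_Nil:
  assumes "vpath 5 {1, 3, 4} q"
  shows "coeff_rel p [] O coeff_rel q []
    = (if path_tgt q = path_src p then coeff_rel (path_mult p q) [] else {})"
proof -
  have "walk_ok 5 (fst q) (snd q)" using assms by (simp add: vpath_def)
  then show ?thesis
    by (simp add: coeff_rel_simps O_assoc Id_on_basis_O_path_rel path_rel_append path_mult_def
        path_tgt_def path_src_def eq_commute[of "fst p"])
qed

lemma coeff_rel_Nil_mult_var:
  "coeff_rel p [] O coeff_rel q [c]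
    = (if snd q = beta_path \<and> snd p = [] \<and> fst p = 1 then var_rel c else {})"
  by (auto simp: coeff_rel_simps var_rel_def vertex_basis_def path_rel_source_2_3)

lemma coeff_rel_var_mult_Nil:
  "coeff_rel p [c] O coeff_rel q []
    = (if snd p = beta_path \<and> snd q = [] \<and> fst q = 3 then var_rel c else {})"
  by (auto simp: coeff_rel_simps var_rel_def vertex_basis_def path_rel_target_4_5)

lemma var_rel_O_var_rel: "var_rel a O var_rel b = {}"
  by (auto simp: var_rel_def)

lemma append_eq_beta_path:
  "xs @ ys = beta_path \<longleftrightarrow>
    (xs = [] \<and> ys = beta_path) \<or> (xs = [Arr_b 2] \<and> ys = [Arr_b 1]) \<or> (xs = beta_path \<and> ys = [])"
  by (simp add: beta_path_def append_eq_Cons_conv) blast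

lemma walk_ok_beta_path: "walk_ok 5 v beta_path \<longleftrightarrow> v = 3"
  by (auto simp: beta_path_def arrow_ok_def)

lemma vpath_append_eq_beta_path:
  assumes "vpath 5 {1, 3, 4} p" and "vpath 5 {1, 3, 4} q"
  shows "(path_tgt q = path_src p \<and> snd q @ snd p = beta_path)
    \<longleftrightarrow> (snd q = beta_path \<and> snd p = [] \<and> fst p = 1) \<or> (snd p = beta_path \<and> snd q = [] \<and> fst q = 3)"
    (is "?lhs \<longleftrightarrow> ?rhs")
proof -
  obtain v ws u us where p: "p = (v, ws)" and q: "q = (u, us)" by fastforce
  have wp: "walk_ok 5 v ws" and wq: "walk_ok 5 u us" "walk_end u us \<in> {1, 3, 4}"
    using assms by (simp_all add: p q vpath_def path_tgt_def)
  show ?thesis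
  proof
    assume ?lhs
    then have end_u: "walk_end u us = v" and "us @ ws = beta_path"
      by (simp_all add: p q path_tgt_def path_src_def)
    then consider "us = []" "ws = beta_path" | "us = [Arr_b 2]" "ws = [Arr_b 1]" | "us = beta_path" "ws = []"
      unfolding append_eq_beta_path by blast
    then show ?rhs
    proof cases
      case 1
      then show ?thesis using wp end_u walk_ok_beta_path by (simp add: p q)
    next
      case 2
      then show ?thesis using wq by simp
    next
      case 3
      then have "u = 3" using wq(1) walk_ok_beta_path by simp
      then have "v = 1" using end_u 3 by (simp add: beta_path_def)
      then show ?thesis by (simp add: p q 3)
    qed
  next
    assume ?rhs
    then consider "us = beta_path" "ws = []" "v = 1" | "ws = beta_path" "us = []" "u = 3"
      by (auto simp: p q)
    then show ?lhs
    proof cases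
      case 1
      then have "u = 3" using wq(1) walk_ok_beta_path by simp
      with 1 show ?thesis by (simp add: p q path_tgt_def path_src_def beta_path_def)
    next
      case 2
      then have "v = 3" using wp walk_ok_beta_path by simp
      with 2 show ?thesis by (simp add: p q path_tgt_def path_src_def)
    qed
  qed
qed

lemma index_coeff_Nil:
  "i < 11 \<Longrightarrow> j < 11 \<Longrightarrow>
    coeff (v, []) w $$ (i, j) = (if w = [] \<and> i = j \<and> i \<in> vertex_basis v then 1 else 0)"
  by (auto simp: coeff_def coeff_rel_def beta_path_def)

lemma coeff_unit:
  "mat 11 11 (\<lambda>(i, j). \<Sum>v\<in>{1, 3, 4}. coeff (v, []) w $$ (i, j))
    = (if w = [] then 1\<^sub>m 11 else (0\<^sub>m 11 11 :: 'a::semiring_1 mat))"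
proof (rule eq_matI)
  fix i j assume "i < dim_row (if w = [] then 1\<^sub>m 11 else (0\<^sub>m 11 11 :: 'a mat))"
    "j < dim_col (if w = [] then 1\<^sub>m 11 else (0\<^sub>m 11 11 :: 'a mat))"
  then have i: "i < 11" and j: "j < 11" by (simp_all split: if_splits)
  then have "i \<in> vertex_basis 1 \<union> vertex_basis 3 \<union> vertex_basis 4"
    by (simp add: vertex_basis_def) presburger
  then obtain u where u: "u \<in> {1, 3, 4}" "i \<in> vertex_basis u" by blast
  have "(\<Sum>v\<in>{1, 3, 4}. coeff (v, []) w $$ (i, j) :: 'a)
    = (\<Sum>v\<in>{1, 3, 4}. if v = u then (if w = [] \<and> i = j then 1 else 0) else 0)"
    using u vertex_basis_disjoint by (intro sum.cong) (auto simp: index_coeff_Nil[OF i j])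
  also have "\<dots> = (if w = [] \<and> i = j then 1 else 0)"
    using u(1) by (simp only: sum.delta finite.emptyI finite.insertI if_True)
  finally show "mat 11 11 (\<lambda>(i, j). \<Sum>v\<in>{1, 3, 4}. coeff (v, []) w $$ (i, j)) $$ (i, j)
    = (if w = [] then 1\<^sub>m 11 else (0\<^sub>m 11 11 :: 'a mat)) $$ (i, j)"
    using i j by simp
qed auto

lemma coeff_mult_degree_one:
  assumes p: "vpath 5 {1, 3, 4} p" and q: "vpath 5 {1, 3, 4} q"
  shows "(coeff p [] * coeff q [c] + coeff p [c] * coeff q [] :: 'a::semiring_1 mat)
    = (if path_tgt q = path_src p then coeff (path_mult p q) [c] else 0\<^sub>m 11 11)"
proof -
  have p1: "fst p \<in> {1, 3, 4}" using p by (simp add: vpath_def path_src_def)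
  let ?Q = "snd q = beta_path \<and> snd p = [] \<and> fst p = 1"
  let ?P = "snd p = beta_path \<and> snd q = [] \<and> fst q = 3"
  have "\<not> (?Q \<and> ?P)" by (auto simp: beta_path_def)
  then have "(coeff p [] * coeff q [c] + coeff p [c] * coeff q [] :: 'a mat)
      = rel_mat 11 (if ?Q \<or> ?P then var_rel c else {})"
    by (simp add: coeff_mult[OF p1] coeff_rel_Nil_mult_var coeff_rel_var_mult_Nil rel_mat_add_exclusive)
  also have "\<dots> = rel_mat 11 (if path_tgt q = path_src p \<and> snd q @ snd p = beta_path then var_rel c else {})"
    unfolding vpath_append_eq_beta_path[OF p q] ..
  also have "\<dots> = (if path_tgt q = path_src p then coeff (path_mult p q) [c] else 0\<^sub>m 11 11)"
    by (simp add: coeff_def coeff_rel_simps path_mult_def rel_mat_empty)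
  finally show ?thesis .
qed

lemma coeff_convolution:
  assumes p: "vpath 5 {1, 3, 4} p" and q: "vpath 5 {1, 3, 4} q"
  shows "mat 11 11 (\<lambda>(i, j). \<Sum>l\<in>{0..length w}. (coeff p (take l w) * coeff q (drop l w) :: 'a::semiring_1 mat) $$ (i, j))
    = (if path_tgt q = path_src p then coeff (path_mult p q) w else 0\<^sub>m 11 11)"
proof -
  have p1: "fst p \<in> {1, 3, 4}" using p by (simp add: vpath_def path_src_def)
  have "mat 11 11 (\<lambda>(i, j). \<Sum>l\<in>{0..length w}. (coeff p (take l w) * coeff q (drop l w) :: 'a mat) $$ (i, j))
    = (if w = [] then coeff p [] * coeff q []
       else if length w = 1 then coeff p [] * coeff q w + coeff p w * coeff q [] else 0\<^sub>m 11 11)"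
  proof (rule convolution_degree_le_one)
    show "(coeff p [a] :: 'a mat) * coeff q [b] = 0\<^sub>m 11 11" for a b
      by (simp add: coeff_mult[OF p1] coeff_rel_simps var_rel_O_var_rel rel_mat_empty)
  qed (simp_all add: coeff_def coeff_rel_simps rel_mat_empty)
  also have "\<dots> = (if path_tgt q = path_src p then coeff (path_mult p q) w else 0\<^sub>m 11 11)"
  proof -
    consider "w = []" | c where "w = [c]" | "2 \<le> length w"
      by (metis One_nat_def length_0_conv length_Suc_conv less_2_cases not_le)
    then show ?thesis
    proof cases
      case 1
      then show ?thesis
        by (simp add: coeff_mult[OF p1] coeff_rel_Nil_mult_Nil[OF q]) (simp add: coeff_def rel_mat_empty)
    next
      case (2 c)
      then show ?thesis using coeff_mult_degree_one[OF p q, of c, where 'a='a] by simp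
    next
      case 3
      then have "w \<noteq> []" "length w \<noteq> 1" by auto
      with 3 show ?thesis by (simp add: coeff_def coeff_rel_simps rel_mat_empty)
    qed
  qed
  finally show ?thesis .
qed

lemma Arr_a_in_set_neq_beta_path: "Arr_a i \<in> set xs \<Longrightarrow> xs \<noteq> beta_path"
  by (auto simp: beta_path_def)

lemma coeff_comm_rel:
  assumes "1 \<le> i" "i \<le> 3"
  shows "coeff (v, pre @ comm_rel_l i @ post) w = coeff (v, pre @ comm_rel_r i @ post) w"
proof -
  have "pre @ comm_rel_l i @ post \<noteq> beta_path" "pre @ comm_rel_r i @ post \<noteq> beta_path"
    using Arr_a_in_set_neq_beta_path[of i] Arr_a_in_set_neq_beta_path[of "Suc i"]
    by (simp_all add: comm_rel_l_def comm_rel_r_def)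
  with assms show ?thesis
    by (simp add: coeff_def coeff_rel_def path_rel_append path_rel_comm_rel)
qed

lemma coeff_zero_rel: "coeff (v, pre @ zero_rel 5 @ post) w = 0\<^sub>m 11 11"
proof -
  have "pre @ zero_rel 5 @ post \<noteq> beta_path"
    using Arr_a_in_set_neq_beta_path[of 4] by (simp add: zero_rel_def)
  then show ?thesis
    by (simp add: coeff_def coeff_rel_def path_rel_append path_rel_zero_rel rel_mat_empty)
qed

theorem coeff_is_bimod: "is_bimod 5 {3, 4} 11 (coeff :: path \<Rightarrow> bool list \<Rightarrow> 'k::field mat)"
  unfolding is_bimod_def vset_3_4
proof (intro conjI allI impI)
  fix p :: path
  show "finite {w. (coeff p w :: 'k mat) \<noteq> 0\<^sub>m 11 11}"
    by (rule finite_subset[OF coeff_support]) simp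
next
  fix w
  show "mat 11 11 (\<lambda>(i, j). \<Sum>v\<in>{1, 3, 4}. (coeff (v, []) w :: 'k mat) $$ (i, j))
    = (if w = [] then 1\<^sub>m 11 else 0\<^sub>m 11 11)"
    by (rule coeff_unit)
qed (simp_all add: coeff_convolution coeff_comm_rel coeff_zero_rel)

section \<open>Homomorphisms between tensor products\<close>

lemma tensor_rep_carrier: "tensor_rep r C m A B p \<in> carrier_mat (r * m) (r * m)"
  by (simp add: tensor_rep_def)

lemma tensor_rep_coeff:
  fixes A B :: "'k::field mat"
  assumes A: "A \<in> carrier_mat m m" and B: "B \<in> carrier_mat m m"
  shows "tensor_rep 11 coeff m A B p
    = kron (coeff p []) (1\<^sub>m m) + kron (coeff p [True]) A + kron (coeff p [False]) B"
proof (rule eq_matI)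
  fix i j
  assume "i < dim_row (kron (coeff p []) (1\<^sub>m m) + kron (coeff p [True]) A + kron (coeff p [False]) B)"
    and "j < dim_col (kron (coeff p []) (1\<^sub>m m) + kron (coeff p [True]) A + kron (coeff p [False]) B)"
  then have i: "i < 11 * m" and j: "j < 11 * m"
    using B by (auto simp: kron_def)
  then have m: "0 < m" by (cases m) auto
  have div: "i div m < 11" "j div m < 11"
    using i j by (simp_all add: less_mult_imp_div_less)
  let ?f = "\<lambda>w. (coeff p w :: 'k mat) $$ (i div m, j div m) * word_eval m A B w $$ (i mod m, j mod m)"
  have "tensor_rep 11 coeff m A B p $$ (i, j) = sum ?f {w. (coeff p w :: 'k mat) \<noteq> 0\<^sub>m 11 11}"
    using i j by (simp add: tensor_rep_def)
  also have "\<dots> = sum ?f {[], [True], [False]}"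
    by (rule sum.mono_neutral_left) (use coeff_support[of p, where 'a='k] div in auto)
  also have "\<dots> = ?f [] + ?f [True] + ?f [False]"
    by simp
  also have "\<dots> = (kron (coeff p []) (1\<^sub>m m) + kron (coeff p [True]) A + kron (coeff p [False]) B) $$ (i, j)"
    using i j m A B by (simp add: kron_def)
  finally show "tensor_rep 11 coeff m A B p $$ (i, j)
    = (kron (coeff p []) (1\<^sub>m m) + kron (coeff p [True]) A + kron (coeff p [False]) B) $$ (i, j)" .
qed (use B in \<open>simp_all add: tensor_rep_def kron_def\<close>)

lemma coeff_rel_generators:
  "coeff_rel (v, []) [] = Id_on (vertex_basis v)"
  "coeff_rel (1, [Arr_a 1, Arr_b 1]) [] = {(2, 0), (3, 1)}"
  "coeff_rel (1, [Arr_a 1, Arr_a 2]) [] = {(6, 0), (7, 1)}"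
  "coeff_rel (3, beta_path) [] = {(3, 4)}"
  "coeff_rel (3, [Arr_a 3]) [] = {(8, 4), (9, 5), (10, 7)}"
  "coeff_rel (4, [Arr_b 3]) [] = {(6, 8), (7, 9)}"
  by (auto simp: coeff_rel_simps arrow_rel_def vertex_basis_def beta_path_def)

lemma vpath_generators:
  "v \<in> {1, 3, 4} \<Longrightarrow> vpath 5 (vset {3, 4}) (v, [])"
  "vpath 5 (vset {3, 4}) (1, [Arr_a 1, Arr_b 1])"
  "vpath 5 (vset {3, 4}) (1, [Arr_a 1, Arr_a 2])"
  "vpath 5 (vset {3, 4}) (3, beta_path)"
  "vpath 5 (vset {3, 4}) (3, [Arr_a 3])"
  "vpath 5 (vset {3, 4}) (4, [Arr_b 3])"
  by (auto simp: vpath_def vset_def path_src_def path_tgt_def arrow_ok_def beta_path_def)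

(* Blocks from the top e_0, e_1 (resp. e_4, e_5 and e_8, e_9) of a vertex to the rest of it. *)
definition unconstrained_blocks :: "(nat \<times> nat) set" where
  "unconstrained_blocks = {2, 3} \<times> {0, 1} \<union> {6, 7} \<times> {4, 5} \<union> {10} \<times> {8, 9}"

lemma unconstrained_blocks_bounds: "(t, s) \<in> unconstrained_blocks \<Longrightarrow> t < 11 \<and> s < 11 \<and> t \<noteq> s"
  by (auto simp: unconstrained_blocks_def)

lemma unconstrained_blocks_irrefl: "(t, t) \<notin> unconstrained_blocks"
  by (auto simp: unconstrained_blocks_def)

lemma unconstrained_blocks_no_chain: "(t, k) \<in> unconstrained_blocks \<Longrightarrow> (k, s) \<notin> unconstrained_blocks"
  by (auto simp: unconstrained_blocks_def)

definition scalar_block_shape :: "nat \<Rightarrow> 'a::zero mat \<Rightarrow> 'a mat \<Rightarrow> bool" where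
  "scalar_block_shape m E F \<longleftrightarrow>
     (\<forall>k<11. \<forall>l<11. (k, l) \<notin> unconstrained_blocks \<longrightarrow> block m E k l = (if k = l then F else 0\<^sub>m m m))"

lemma scalar_block_shape_outside:
  "scalar_block_shape m E F \<Longrightarrow> k < 11 \<Longrightarrow> l < 11 \<Longrightarrow> (k, l) \<notin> unconstrained_blocks
    \<Longrightarrow> block m E k l = (if k = l then F else 0\<^sub>m m m)"
  unfolding scalar_block_shape_def by blast

locale tensor_intertwiner =
  fixes m :: nat and E A B A' B' :: "'k::field mat"
  assumes E: "E \<in> carrier_mat (11 * m) (11 * m)"
    and A: "A \<in> carrier_mat m m" and B: "B \<in> carrier_mat m m"
    and A': "A' \<in> carrier_mat m m" and B': "B' \<in> carrier_mat m m"
    and intertwines: "\<And>p. vpath 5 (vset {3, 4}) p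
      \<Longrightarrow> E * tensor_rep 11 coeff m A B p = tensor_rep 11 coeff m A' B' p * E"
begin

lemma dim_A_B [simp]:
  "dim_row A = m" "dim_col A = m" "dim_row B = m" "dim_col B = m"
  "dim_row A' = m" "dim_col A' = m" "dim_row B' = m" "dim_col B' = m"
  using A B A' B' by auto

abbreviation blk :: "nat \<Rightarrow> nat \<Rightarrow> 'k mat" where
  "blk \<equiv> block m E"

lemma commutes_with_generator:
  assumes "vpath 5 (vset {3, 4}) p" "snd p \<noteq> beta_path" "coeff_rel p [] = R"
  shows "E * kron (rel_mat 11 R) (1\<^sub>m m) = kron (rel_mat 11 R) (1\<^sub>m m) * E"
proof -
  have "tensor_rep 11 coeff m X Y p = kron (rel_mat 11 R) (1\<^sub>m m)"
    if "X \<in> carrier_mat m m" "Y \<in> carrier_mat m m" for X Y :: "'k mat"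
    using that assms(2,3)
    by (simp add: tensor_rep_coeff coeff_def coeff_rel_simps rel_mat_empty kron_zero_mat kron_carrier)
  then show ?thesis
    using intertwines[OF assms(1)] A B A' B' by simp
qed

lemma block_rules:
  assumes "vpath 5 (vset {3, 4}) p" "snd p \<noteq> beta_path" "coeff_rel p [] = R"
    and "R \<subseteq> {..<11} \<times> {..<11}" "single_valued R" "single_valued (R\<inverse>)"
  shows "(k', k) \<in> R \<Longrightarrow> (l', l) \<in> R \<Longrightarrow> blk k' l' = blk k l"
    and "(k', k) \<in> R \<Longrightarrow> l < 11 \<Longrightarrow> l \<notin> Range R \<Longrightarrow> blk k l = 0\<^sub>m m m"
    and "(l', l) \<in> R \<Longrightarrow> k < 11 \<Longrightarrow> k \<notin> Domain R \<Longrightarrow> blk k l' = 0\<^sub>m m m"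
  using blocks_commuting_with_kron_rel_mat[OF E assms(4-6) commutes_with_generator[OF assms(1-3)]]
  by blast+

lemma beta_block_equations:
  shows "blk 3 2 * B = blk 4 5"
    and "blk 3 3 + blk 3 2 * A = blk 4 4"
    and "blk 2 3 + blk 2 2 * A = A' * blk 4 4 + B' * blk 5 4"
    and "blk 2 2 * B = A' * blk 4 5 + B' * blk 5 5"
proof -
  let ?K = "\<lambda>R W. kron (rel_mat 11 R) W :: 'k mat"
  have T: "tensor_rep 11 coeff m X Y (3, beta_path) = ?K {(3, 4)} (1\<^sub>m m) + ?K {(2, 4)} X + ?K {(2, 5)} Y"
    if "X \<in> carrier_mat m m" "Y \<in> carrier_mat m m" for X Y
    using that coeff_rel_generators(4)
    by (simp add: tensor_rep_coeff coeff_def coeff_rel_simps var_rel_def)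
  have K: "?K R W \<in> carrier_mat (11 * m) (11 * m)" if "W \<in> carrier_mat m m" for R W
    using that by (simp add: kron_carrier)
  have eq: "E * (?K {(3, 4)} (1\<^sub>m m) + ?K {(2, 4)} A + ?K {(2, 5)} B)
    = (?K {(3, 4)} (1\<^sub>m m) + ?K {(2, 4)} A' + ?K {(2, 5)} B') * E"
    using intertwines[OF vpath_generators(4)] T[OF A B] T[OF A' B'] by simp
  have blocks: "(if l = 4 then blk k 3 * 1\<^sub>m m else 0\<^sub>m m m) + (if l = 4 then blk k 2 * A else 0\<^sub>m m m)
        + (if l = 5 then blk k 2 * B else 0\<^sub>m m m)
      = (if k = 3 then 1\<^sub>m m * blk 4 l else 0\<^sub>m m m) + (if k = 2 then A' * blk 4 l else 0\<^sub>m m m)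
        + (if k = 2 then B' * blk 5 l else 0\<^sub>m m m)" if "k < 11" "l < 11" for k l
    using arg_cong[OF eq, of "\<lambda>X. block m X k l"] that E A B A' B' K
    by (simp add: block_mult_add_distrib block_add_mult_distrib block_mult_kron_singleton
        block_kron_singleton_mult)
  show "blk 3 2 * B = blk 4 5"
    using blocks[of 3 5] by simp
  show "blk 3 3 + blk 3 2 * A = blk 4 4"
    using blocks[of 3 4] by simp
  show "blk 2 3 + blk 2 2 * A = A' * blk 4 4 + B' * blk 5 4"
    using blocks[of 2 4] by simp
  show "blk 2 2 * B = A' * blk 4 5 + B' * blk 5 5"
    using blocks[of 2 5] by simp
qed

lemma block_cross_vertex:
  assumes "u \<in> {1, 3, 4}" "k \<in> vertex_basis u" "l < 11" "l \<notin> vertex_basis u"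
  shows "blk k l = 0\<^sub>m m m"
  using assms
  by (intro block_rules(2)[OF vpath_generators(1) _ coeff_rel_generators(1), of u k k])
    (auto simp: vertex_basis_def single_valued_def beta_path_def)

lemma blocks_b1a1:
  shows "blk 0 2 = 0\<^sub>m m m" "blk 0 3 = 0\<^sub>m m m" "blk 1 2 = 0\<^sub>m m m" "blk 1 3 = 0\<^sub>m m m"
    and "blk 3 2 = blk 1 0" "blk 2 3 = blk 0 1" "blk 2 2 = blk 0 0" "blk 3 3 = blk 1 1"
proof -
  have "snd (1::nat, [Arr_a 1, Arr_b 1]) \<noteq> beta_path" "{(2::nat, 0::nat), (3, 1)} \<subseteq> {..<11} \<times> {..<11}"
    "single_valued {(2::nat, 0::nat), (3, 1)}" "single_valued ({(2::nat, 0::nat), (3, 1)}\<inverse>)"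
    by (auto simp: beta_path_def single_valued_def)
  note rules = block_rules[OF vpath_generators(2) this(1) coeff_rel_generators(2) this(2-4)]
  show "blk 0 2 = 0\<^sub>m m m" "blk 0 3 = 0\<^sub>m m m" "blk 1 2 = 0\<^sub>m m m" "blk 1 3 = 0\<^sub>m m m"
    by (rule rules(3); simp)+
  show "blk 3 2 = blk 1 0" "blk 2 3 = blk 0 1" "blk 2 2 = blk 0 0" "blk 3 3 = blk 1 1"
    by (rule rules(1); simp)+
qed

lemma blocks_a2a1:
  shows "blk 4 6 = 0\<^sub>m m m" "blk 4 7 = 0\<^sub>m m m" "blk 5 6 = 0\<^sub>m m m" "blk 5 7 = 0\<^sub>m m m"
    and "blk 7 6 = blk 1 0" "blk 6 7 = blk 0 1" "blk 6 6 = blk 0 0" "blk 7 7 = blk 1 1"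
proof -
  have "snd (1::nat, [Arr_a 1, Arr_a 2]) \<noteq> beta_path" "{(6::nat, 0::nat), (7, 1)} \<subseteq> {..<11} \<times> {..<11}"
    "single_valued {(6::nat, 0::nat), (7, 1)}" "single_valued ({(6::nat, 0::nat), (7, 1)}\<inverse>)"
    by (auto simp: beta_path_def single_valued_def)
  note rules = block_rules[OF vpath_generators(3) this(1) coeff_rel_generators(3) this(2-4)]
  show "blk 4 6 = 0\<^sub>m m m" "blk 4 7 = 0\<^sub>m m m" "blk 5 6 = 0\<^sub>m m m" "blk 5 7 = 0\<^sub>m m m"
    by (rule rules(3); simp)+
  show "blk 7 6 = blk 1 0" "blk 6 7 = blk 0 1" "blk 6 6 = blk 0 0" "blk 7 7 = blk 1 1"
    by (rule rules(1); simp)+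
qed

lemma blocks_a3:
  shows "blk 7 6 = 0\<^sub>m m m"
    and "blk 9 8 = blk 5 4" "blk 8 9 = blk 4 5" "blk 8 8 = blk 4 4" "blk 9 9 = blk 5 5" "blk 10 10 = blk 7 7"
proof -
  have "snd (3::nat, [Arr_a 3]) \<noteq> beta_path" "{(8::nat, 4::nat), (9, 5), (10, 7)} \<subseteq> {..<11} \<times> {..<11}"
    "single_valued {(8::nat, 4::nat), (9, 5), (10, 7)}" "single_valued ({(8::nat, 4::nat), (9, 5), (10, 7)}\<inverse>)"
    by (auto simp: beta_path_def single_valued_def)
  note rules = block_rules[OF vpath_generators(5) this(1) coeff_rel_generators(5) this(2-4)]
  show "blk 7 6 = 0\<^sub>m m m"
    by (rule rules(2); simp)
  show "blk 9 8 = blk 5 4" "blk 8 9 = blk 4 5" "blk 8 8 = blk 4 4" "blk 9 9 = blk 5 5" "blk 10 10 = blk 7 7"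
    by (rule rules(1); simp)+
qed

lemma blocks_b3:
  shows "blk 8 10 = 0\<^sub>m m m" "blk 9 10 = 0\<^sub>m m m"
    and "blk 7 6 = blk 9 8" "blk 6 7 = blk 8 9" "blk 6 6 = blk 8 8" "blk 7 7 = blk 9 9"
proof -
  have "snd (4::nat, [Arr_b 3]) \<noteq> beta_path" "{(6::nat, 8::nat), (7, 9)} \<subseteq> {..<11} \<times> {..<11}"
    "single_valued {(6::nat, 8::nat), (7, 9)}" "single_valued ({(6::nat, 8::nat), (7, 9)}\<inverse>)"
    by (auto simp: beta_path_def single_valued_def)
  note rules = block_rules[OF vpath_generators(6) this(1) coeff_rel_generators(6) this(2-4)]
  show "blk 8 10 = 0\<^sub>m m m" "blk 9 10 = 0\<^sub>m m m"
    by (rule rules(2); simp)+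
  show "blk 7 6 = blk 9 8" "blk 6 7 = blk 8 9" "blk 6 6 = blk 8 8" "blk 7 7 = blk 9 9"
    by (rule rules(1); simp)+
qed

lemma blocks_zero:
  "blk 1 0 = 0\<^sub>m m m" "blk 3 2 = 0\<^sub>m m m" "blk 9 8 = 0\<^sub>m m m" "blk 5 4 = 0\<^sub>m m m"
  "blk 4 5 = 0\<^sub>m m m" "blk 8 9 = 0\<^sub>m m m" "blk 6 7 = 0\<^sub>m m m" "blk 0 1 = 0\<^sub>m m m" "blk 2 3 = 0\<^sub>m m m"
  using blocks_a3(1) blocks_a2a1(5,6) blocks_b1a1(5,6) blocks_b3(3,4) blocks_a3(2,3)
    beta_block_equations(1)
  by simp_all

lemma blocks_diagonal:
  "blk 2 2 = blk 0 0" "blk 6 6 = blk 0 0" "blk 8 8 = blk 0 0" "blk 4 4 = blk 0 0"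
  "blk 3 3 = blk 0 0" "blk 1 1 = blk 0 0" "blk 7 7 = blk 0 0" "blk 9 9 = blk 0 0"
  "blk 5 5 = blk 0 0" "blk 10 10 = blk 0 0"
  using blocks_b1a1(7,8) blocks_a2a1(7,8) blocks_b3(5,6) blocks_a3(4-6)
    beta_block_equations(2) blocks_zero(2)
  by simp_all

lemma block_00_intertwines:
  "blk 0 0 * A = A' * blk 0 0" "blk 0 0 * B = B' * blk 0 0"
  using beta_block_equations(3,4) blocks_zero blocks_diagonal by simp_all

lemma scalar_block_shape: "scalar_block_shape m E (blk 0 0)"
  unfolding scalar_block_shape_def
proof (intro allI impI)
  fix k l :: nat assume kl: "k < 11" "l < 11" and free: "(k, l) \<notin> unconstrained_blocks"
  have "k \<in> vertex_basis 1 \<union> vertex_basis 3 \<union> vertex_basis 4"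
    using kl by (simp add: vertex_basis_def) presburger
  then obtain u where u: "u \<in> {1, 3, 4}" "k \<in> vertex_basis u" by blast
  show "blk k l = (if k = l then blk 0 0 else 0\<^sub>m m m)"
  proof (cases "l \<in> vertex_basis u")
    case False
    then show ?thesis using block_cross_vertex[OF u kl(2)] u(2) by auto
  next
    case True
    note facts = blocks_b1a1(1-4) blocks_a2a1(1-4) blocks_a3(1) blocks_b3(1,2) blocks_zero blocks_diagonal
    from u consider "u = 1" | "u = 3" | "u = 4" by blast
    then show ?thesis
    proof cases
      case 1
      with u(2) True have "k = 0 \<or> k = 1 \<or> k = 2 \<or> k = 3" "l = 0 \<or> l = 1 \<or> l = 2 \<or> l = 3"
        by (simp_all add: vertex_basis_def)
      \<comment> \<open>the simplifier writes the index 1 as \<open>Suc 0\<close> here\<close>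
      with free show ?thesis
        by (elim disjE) (simp_all add: unconstrained_blocks_def facts[unfolded One_nat_def])
    next
      case 2
      with u(2) True have "k = 4 \<or> k = 5 \<or> k = 6 \<or> k = 7" "l = 4 \<or> l = 5 \<or> l = 6 \<or> l = 7"
        by (simp_all add: vertex_basis_def)
      with free show ?thesis
        by (elim disjE) (simp_all add: unconstrained_blocks_def facts)
    next
      case 3
      with u(2) True have "k = 8 \<or> k = 9 \<or> k = 10" "l = 8 \<or> l = 9 \<or> l = 10"
        by (simp_all add: vertex_basis_def)
      with free show ?thesis
        by (elim disjE) (simp_all add: unconstrained_blocks_def facts)
    qed
  qed
qed

end

lemma scalar_block_shape_mult_00:
  fixes E :: "'a::semiring_0 mat"
  assumes "E \<in> carrier_mat (11 * m) (11 * m)" "E' \<in> carrier_mat (11 * m) (11 * m)"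
    and "scalar_block_shape m E F"
  shows "block m (E * E') 0 0 = block m E 0 0 * block m E' 0 0"
proof (rule block_mult_single[OF assms(1,2)])
  fix k' :: nat assume "k' < 11" "k' \<noteq> 0"
  moreover have "(0, k') \<notin> unconstrained_blocks"
    by (simp add: unconstrained_blocks_def)
  ultimately show "block m E 0 k' = 0\<^sub>m m m"
    using scalar_block_shape_outside[OF assms(3)] by simp
qed simp_all

lemma scalar_block_shape_idempotent_fix_point:
  fixes E :: "'a::semiring_1 mat"
  assumes E: "E \<in> carrier_mat (11 * m) (11 * m)" and shape: "scalar_block_shape m E F"
    and idem: "E * E = E" and ts: "(t, s) \<in> unconstrained_blocks"
  shows "block m E t s = F * block m E t s + block m E t s * F"
proof -
  note outside = scalar_block_shape_outside[OF shape]
  have ts': "t < 11" "s < 11" "t \<noteq> s" "(t, t) \<notin> unconstrained_blocks" "(s, s) \<notin> unconstrained_blocks"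
    using unconstrained_blocks_bounds[OF ts] unconstrained_blocks_irrefl by blast+
  have "block m E t s = block m (E * E) t s"
    using idem by simp
  also have "\<dots> = block m E t t * block m E t s + block m E t s * block m E s s"
  proof (rule block_mult_pair[OF E E])
    fix k' assume k': "k' < 11" "k' \<noteq> t" "k' \<noteq> s"
    show "block m E t k' = 0\<^sub>m m m \<or> block m E k' s = 0\<^sub>m m m"
    proof (cases "(t, k') \<in> unconstrained_blocks")
      case True
      then have "(k', s) \<notin> unconstrained_blocks" by (rule unconstrained_blocks_no_chain)
      then show ?thesis using ts'(2) k' outside by simp
    next
      case False
      then show ?thesis using ts'(1) k' outside by simp
    qed
  qed (use ts' in auto)
  also have "\<dots> = F * block m E t s + block m E t s * F"
    using ts' outside by simp
  finally show ?thesis .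
qed

lemma scalar_block_shape_idempotent:
  fixes E :: "'a::ring_1 mat"
  assumes E: "E \<in> carrier_mat (11 * m) (11 * m)" and shape: "scalar_block_shape m E F"
    and idem: "E * E = E" and F: "F = 0\<^sub>m m m \<or> F = 1\<^sub>m m"
  shows "E = 0\<^sub>m (11 * m) (11 * m) \<or> E = 1\<^sub>m (11 * m)"
proof -
  have inside: "block m E t s = 0\<^sub>m m m" if "(t, s) \<in> unconstrained_blocks" for t s
    using F scalar_block_shape_idempotent_fix_point[OF E shape idem that]
      mat_eq_add_self_imp_zero[OF block_carrier]
    by auto
  have blocks: "block m E k l = (if k = l then F else 0\<^sub>m m m)" if "k < 11" "l < 11" for k l
  proof (cases "(k, l) \<in> unconstrained_blocks")
    case True
    moreover have "k \<noteq> l"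
      using unconstrained_blocks_bounds[OF True] by simp
    ultimately show ?thesis using inside by simp
  qed (use scalar_block_shape_outside[OF shape] that in simp)
  from F show ?thesis
  proof
    assume "F = 0\<^sub>m m m"
    then have "E = 0\<^sub>m (11 * m) (11 * m)"
      by (intro eq_mat_blockI[OF E zero_carrier_mat]) (simp add: blocks block_zero_mat)
    then show ?thesis ..
  next
    assume "F = 1\<^sub>m m"
    then have "E = 1\<^sub>m (11 * m)"
      by (intro eq_mat_blockI[OF E one_carrier_mat]) (simp add: blocks block_one_mat)
    then show ?thesis ..
  qed
qed

lemma tensor_rep_indec:
  fixes A B :: "'k::field mat"
  assumes A: "A \<in> carrier_mat m m" and B: "B \<in> carrier_mat m m" and indec: "kxy_indec m A B"
  shows "rep_indec 5 {3, 4} (11 * m) (tensor_rep 11 coeff m A B)"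
  unfolding rep_indec_def
proof (intro conjI allI impI)
  show "0 < 11 * m" using indec by (simp add: kxy_indec_def)
  fix E :: "'k mat"
  assume E: "E \<in> carrier_mat (11 * m) (11 * m)"
    and comm: "\<forall>p. vpath 5 (vset {3, 4}) p \<longrightarrow> E * tensor_rep 11 coeff m A B p = tensor_rep 11 coeff m A B p * E"
    and idem: "E * E = E"
  interpret tensor_intertwiner m E A B A B
    using E A B comm by unfold_locales auto
  have "blk 0 0 * blk 0 0 = blk 0 0"
    using scalar_block_shape_mult_00[OF E E scalar_block_shape] idem by simp
  then have "blk 0 0 = 0\<^sub>m m m \<or> blk 0 0 = 1\<^sub>m m"
    using indec block_00_intertwines unfolding kxy_indec_def by auto
  then show "E = 0\<^sub>m (11 * m) (11 * m) \<or> E = 1\<^sub>m (11 * m)"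
    by (rule scalar_block_shape_idempotent[OF E scalar_block_shape idem])
qed

lemma tensor_rep_iso_imp_kxy_iso:
  fixes A B A' B' :: "'k::field mat"
  assumes A: "A \<in> carrier_mat m m" and B: "B \<in> carrier_mat m m"
    and A': "A' \<in> carrier_mat m' m'" and B': "B' \<in> carrier_mat m' m'"
    and iso: "rep_iso 5 {3, 4} (11 * m) (tensor_rep 11 coeff m A B) (11 * m') (tensor_rep 11 coeff m' A' B')"
  shows "kxy_iso m A B m' A' B'"
proof -
  have m': "m' = m" using iso by (simp add: rep_iso_def)
  have "\<exists>S T. S \<in> carrier_mat (11 * m) (11 * m) \<and> T \<in> carrier_mat (11 * m) (11 * m) \<and>
      S * T = 1\<^sub>m (11 * m) \<and> T * S = 1\<^sub>m (11 * m) \<and>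
      (\<forall>p. vpath 5 (vset {3, 4}) p \<longrightarrow> S * tensor_rep 11 coeff m A B p = tensor_rep 11 coeff m A' B' p * S)"
    using iso unfolding rep_iso_def m' by (rule conjunct2)
  then obtain S T where S: "S \<in> carrier_mat (11 * m) (11 * m)" and T: "T \<in> carrier_mat (11 * m) (11 * m)"
    and ST: "S * T = 1\<^sub>m (11 * m)" and TS: "T * S = 1\<^sub>m (11 * m)"
    and S_hom: "\<And>p. vpath 5 (vset {3, 4}) p \<Longrightarrow> S * tensor_rep 11 coeff m A B p = tensor_rep 11 coeff m A' B' p * S"
    by blast
  interpret S: tensor_intertwiner m S A B A' B'
    using S A B A' B' S_hom m' by unfold_locales auto
  have T_hom: "T * tensor_rep 11 coeff m A' B' p = tensor_rep 11 coeff m A B p * T"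
    if "vpath 5 (vset {3, 4}) p" for p
    by (rule inverse_intertwines[OF S T tensor_rep_carrier tensor_rep_carrier ST TS S_hom[OF that]])
  interpret T: tensor_intertwiner m T A' B' A B
    using T A B A' B' T_hom m' by unfold_locales auto
  have one: "block m (1\<^sub>m (11 * m)) 0 0 = (1\<^sub>m m :: 'k mat)"
    using block_one_mat[of 0 11 0 m] by simp
  have "block m S 0 0 * block m T 0 0 = 1\<^sub>m m"
    using scalar_block_shape_mult_00[OF S T S.scalar_block_shape] ST one by simp
  moreover have "block m T 0 0 * block m S 0 0 = 1\<^sub>m m"
    using scalar_block_shape_mult_00[OF T S T.scalar_block_shape] TS one by simp
  ultimately show ?thesis
    unfolding kxy_iso_def m' using S.block_00_intertwines
    by (intro conjI exI[of _ "block m S 0 0"] exI[of _ "block m T 0 0"]) simp_all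
qed

theorem lemma4:
  shows "wild 5 {3, 4} TYPE('k::alg_closed_field)"
  unfolding wild_def
  by (intro exI[of _ 11] exI[of _ coeff] conjI allI impI coeff_is_bimod tensor_rep_indec
      tensor_rep_iso_imp_kxy_iso)

end
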